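(* Let $V$ be a finite-dimensional scalar product space, $T$ a self-adjoint operator on $V$, $\lambda$ an eigenvalue of $T$, and $U=T-\lambda I$. Let $x\in K_\lambda$ generate a cycle of generalized eigenvectors of length $p$ (i.e. $p$ is the smallest positive integer with $U^p x=0$), put $v_i=U^{p-i}x$ for $i=1,\dots,p$, and let $H=\operatorname{span}\{v_1,\dots,v_p\}$. If $\langle v_1,v_p\rangle\neq 0$, then there exists $x'\in H$ generating a cycle of generalized eigenvectors $v'_i=U^{p-i}x'$ ($i=1,\dots,p$) of length $p$ which spans $H$, such that $v'_1,\dots,v'_p$ is a skew-normal sequence whose sign is $\operatorname{sgn}\langle v_1,v_p\rangle$ if $\lambda\in\mathbb{R}$, and $1$ if $\lambda\in\mathbb{C}\setminus\mathbb{R}$.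
   Context: A scalar product is a non-degenerate symmetric bilinear form $\langle\cdot,\cdot\rangle$ over $\mathbb{R}$ or $\mathbb{C}$ (bilinear in the complex case). $T$ is self-adjoint if $\langle Tx,y\rangle=\langle x,Ty\rangle$ for all $x,y$. If $V$ is real, non-real eigenvalues and their generalized eigenspaces are taken in the complexification $V^{\mathbb{C}}$ with the bilinear extension of the scalar product and of $T$; when $\lambda$ is real, everything takes place in the real space $V$ (so $x$ is real and $\langle v_1,v_p\rangle$ is real). $K_\lambda=\{x:(T-\lambda I)^m x=0\text{ for some }m\ge1\}$. A sequence $w_1,\dots,w_p$ is a skew-normal sequence of sign $\varepsilon\in\{\pm1\}$ if $\langle w_i,w_j\rangle=\varepsilon$ when $i+j=p+1$ and $0$ otherwise. *)

theory Defs
  imports "HOL-Analysis.Analysis"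
begin

definition scalar_product :: "('a::field^'n \<Rightarrow> 'a^'n \<Rightarrow> 'a) \<Rightarrow> bool" where
  "scalar_product B \<longleftrightarrow>
     (\<forall>x y z. B (x + y) z = B x z + B y z) \<and>
     (\<forall>c x y. B (c *s x) y = c * B x y) \<and>
     (\<forall>x y. B x y = B y x) \<and>
     (\<forall>x. (\<forall>y. B x y = 0) \<longrightarrow> x = 0)"

definition self_adjoint :: "('a::field^'n \<Rightarrow> 'a^'n \<Rightarrow> 'a) \<Rightarrow> 'a^'n^'n \<Rightarrow> bool" where
  "self_adjoint B T \<longleftrightarrow> (\<forall>x y. B (T *v x) y = B x (T *v y))"

definition is_eigenvalue :: "'a::field^'n^'n \<Rightarrow> 'a \<Rightarrow> bool" where
  "is_eigenvalue T lam \<longleftrightarrow> (\<exists>x. x \<noteq> 0 \<and> T *v x = lam *s x)"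

definition Upow :: "'a::field^'n^'n \<Rightarrow> 'a \<Rightarrow> nat \<Rightarrow> 'a^'n \<Rightarrow> 'a^'n" where
  "Upow T lam k x = ((\<lambda>y. T *v y - lam *s y) ^^ k) x"

definition gen_cycle :: "'a::field^'n^'n \<Rightarrow> 'a \<Rightarrow> 'a^'n \<Rightarrow> nat \<Rightarrow> bool" where
  "gen_cycle T lam x p \<longleftrightarrow> 0 < p \<and> Upow T lam p x = 0 \<and>
     (\<forall>k. 0 < k \<and> k < p \<longrightarrow> Upow T lam k x \<noteq> 0)"

definition cyc :: "'a::field^'n^'n \<Rightarrow> 'a \<Rightarrow> 'a^'n \<Rightarrow> nat \<Rightarrow> nat \<Rightarrow> 'a^'n" where
  "cyc T lam x p i = Upow T lam (p - i) x"

definition skew_normal :: "('a::field^'n \<Rightarrow> 'a^'n \<Rightarrow> 'a) \<Rightarrow> (nat \<Rightarrow> 'a^'n) \<Rightarrow> nat \<Rightarrow> 'a \<Rightarrow> bool" where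
  "skew_normal B w p eps \<longleftrightarrow> (eps = 1 \<or> eps = -1) \<and>
     (\<forall>i\<in>{1..p}. \<forall>j\<in>{1..p}. B (w i) (w j) = (if i + j = p + 1 then eps else 0))"

end

theory Submission
  imports Defs "HOL-Computational_Algebra.Formal_Power_Series"
begin

text \<open>Write \<open>x' = q(U) x\<close> for a formal power series \<open>q\<close>; only its first \<open>p\<close> coefficients
  matter since \<open>U\<^sup>p x = 0\<close>. As \<open>U\<close> is self-adjoint, \<open>\<langle>U\<^sup>a x', U\<^sup>b x'\<rangle>\<close> is the coefficient of
  index \<open>p - 1 - a - b\<close> of \<open>q\<^sup>2 h\<close>, where \<open>h\<^sub>m = \<langle>x, U\<^bsup>p-1-m\<^esup> x\<rangle>\<close> and \<open>h\<^sub>0 = \<langle>v\<^sub>1, v\<^sub>p\<rangle> \<noteq> 0\<close>.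
  Hence \<open>x'\<close> yields a skew-normal sequence of sign \<open>\<epsilon>\<close> as soon as \<open>q\<^sup>2 h = \<epsilon>\<close>, i.e. \<open>q\<close> is a
  square root of \<open>\<epsilon> h\<^sup>-\<^sup>1\<close>. Such a root exists whenever \<open>\<epsilon> / h\<^sub>0\<close> is a square in the field:
  always over \<open>\<complex>\<close>, and for \<open>\<epsilon> = sgn h\<^sub>0\<close> over \<open>\<real>\<close>. Since \<open>q\<^sub>0 \<noteq> 0\<close>, \<open>q(U)\<close> is invertible
  on the cycle space, so \<open>x'\<close> generates a cycle with the same span.\<close>

lemma Upow_0 [simp]: "Upow T lam 0 x = x"
  by (simp add: Upow_def)

lemma Upow_Suc: "Upow T lam (Suc k) x = T *v Upow T lam k x - lam *s Upow T lam k x"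
  by (simp add: Upow_def)

lemma Upow_add: "Upow T lam (a + b) x = Upow T lam a (Upow T lam b x)"
  by (simp add: Upow_def funpow_add)

lemma Upow_vec_add: "Upow T lam k (x + y) = Upow T lam k x + Upow T lam k y"
  by (induction k) (simp_all add: Upow_Suc algebra_simps)

lemma Upow_scale: "Upow T lam k (c *s x) = c *s Upow T lam k x"
  by (induction k)
    (simp_all add: Upow_Suc vector_scalar_commute vec.scale_right_diff_distrib mult.commute)

lemma Upow_vec_zero [simp]: "Upow T lam k 0 = 0"
  by (induction k) (simp_all add: Upow_Suc)

lemma Upow_sum: "Upow T lam k (sum f A) = (\<Sum>a\<in>A. Upow T lam k (f a))"
  by (induction A rule: infinite_finite_induct) (simp_all add: Upow_vec_add)

lemma Upow_eq_0_mono: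
  assumes "Upow T lam p x = 0" and "p \<le> m"
  shows "Upow T lam m x = 0"
  using assms Upow_add[of T lam "m - p" p x] by simp

context
  fixes B :: "'a::field^'n \<Rightarrow> 'a^'n \<Rightarrow> 'a"
  assumes B: "scalar_product B"
begin

lemma scalar_product_add_left: "B (x + y) z = B x z + B y z"
  using B unfolding scalar_product_def by blast

lemma scalar_product_scale_left: "B (c *s x) y = c * B x y"
  using B unfolding scalar_product_def by blast

lemma scalar_product_commute: "B x y = B y x"
  using B unfolding scalar_product_def by blast

lemma scalar_product_scale_right: "B y (c *s x) = c * B y x"
  by (metis scalar_product_commute scalar_product_scale_left)

lemma scalar_product_zero_left [simp]: "B 0 y = 0"
  using scalar_product_scale_left[of 0 0 y] by simp

lemma scalar_product_zero_right [simp]: "B y 0 = 0"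
  by (metis scalar_product_commute scalar_product_zero_left)

lemma scalar_product_diff_left: "B (x - y) z = B x z - B y z"
  using scalar_product_add_left[of "x - y" y z] by simp

lemma scalar_product_diff_right: "B z (x - y) = B z x - B z y"
  by (metis scalar_product_commute scalar_product_diff_left)

lemma scalar_product_sum_left: "B (sum f A) y = (\<Sum>a\<in>A. B (f a) y)"
  by (induction A rule: infinite_finite_induct) (simp_all add: scalar_product_add_left)

lemma scalar_product_sum_right: "B y (sum f A) = (\<Sum>a\<in>A. B y (f a))"
  by (induction A rule: infinite_finite_induct)
    (simp_all add: scalar_product_add_left scalar_product_commute[of y])

lemma self_adjoint_Upow:
  assumes "self_adjoint B T"
  shows "B (Upow T lam k v) w = B v (Upow T lam k w)"
proof (induction k arbitrary: w)
  case (Suc k)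
  have "B (Upow T lam (Suc k) v) w = B (T *v Upow T lam k v) w - lam * B (Upow T lam k v) w"
    by (simp add: Upow_Suc scalar_product_diff_left scalar_product_scale_left)
  also have "\<dots> = B (Upow T lam k v) (T *v w - lam *s w)"
    using assms by (simp add: self_adjoint_def scalar_product_diff_right scalar_product_scale_right)
  also have "\<dots> = B v (Upow T lam (Suc k) w)"
    using Suc Upow_add[of T lam k 1 w] by (simp add: Upow_def)
  finally show ?case .
qed simp

end

lemma sum_square_eq_triangle:
  fixes F :: "nat \<Rightarrow> nat \<Rightarrow> 'b::comm_monoid_add"
  assumes "\<And>i j. p \<le> i + j \<Longrightarrow> F i j = 0"
  shows "(\<Sum>i<p. \<Sum>j<p. F i j) = (\<Sum>k<p. \<Sum>i\<le>k. F i (k - i))"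
proof -
  have "(\<Sum>i<p. \<Sum>j<p. F i j) = (\<Sum>(i,j)\<in>{..<p} \<times> {..<p}. F i j)"
    by (simp add: sum.cartesian_product)
  also have "\<dots> = (\<Sum>(i,j)\<in>{(i,j). i + j < p}. F i j)"
    by (rule sum.mono_neutral_right) (use assms leI in fastforce)+
  also have "\<dots> = (\<Sum>k<p. \<Sum>i\<le>k. F i (k - i))"
    by (rule sum.triangle_reindex)
  finally show ?thesis .
qed

text \<open>The operator \<open>f(U)\<close> truncated after \<open>U\<^bsup>p-1\<^esup>\<close>; on vectors killed by \<open>U\<^sup>p\<close> this is a ring action of
  the power series.\<close>

definition fps_apply :: "'a::field^'n^'n \<Rightarrow> 'a \<Rightarrow> nat \<Rightarrow> 'a fps \<Rightarrow> 'a^'n \<Rightarrow> 'a^'n" where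
  "fps_apply T lam p f v = (\<Sum>k<p. fps_nth f k *s Upow T lam k v)"

lemma Upow_fps_apply: "Upow T lam m (fps_apply T lam p f v) = fps_apply T lam p f (Upow T lam m v)"
  unfolding fps_apply_def Upow_sum Upow_scale
  by (intro sum.cong refl) (metis Upow_add add.commute)

lemma fps_apply_one:
  assumes "0 < p"
  shows "fps_apply T lam p 1 v = v"
proof -
  have "fps_apply T lam p 1 v = (\<Sum>k<p. if k = 0 then v else 0)"
    unfolding fps_apply_def by (intro sum.cong refl) simp
  then show ?thesis using assms by simp
qed

lemma fps_apply_zero [simp]: "fps_apply T lam p f 0 = 0"
  by (simp add: fps_apply_def)

lemma fps_apply_mult:
  assumes "Upow T lam p v = 0"
  shows "fps_apply T lam p f (fps_apply T lam p g v) = fps_apply T lam p (f * g) v"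
proof -
  have "fps_apply T lam p f (fps_apply T lam p g v) =
      (\<Sum>i<p. \<Sum>j<p. (fps_nth f i * fps_nth g j) *s Upow T lam (i + j) v)"
    unfolding fps_apply_def Upow_sum Upow_scale by (simp add: vec.scale_sum_right Upow_add)
  also have "\<dots> = (\<Sum>k<p. \<Sum>i\<le>k. (fps_nth f i * fps_nth g (k - i)) *s Upow T lam k v)"
    by (subst sum_square_eq_triangle) (simp_all add: Upow_eq_0_mono[OF assms])
  also have "\<dots> = fps_apply T lam p (f * g) v"
    unfolding fps_apply_def fps_mult_nth vec.scale_sum_left by (simp add: atLeast0AtMost)
  finally show ?thesis .
qed

lemma self_adjoint_fps_apply:
  assumes "scalar_product B" and "self_adjoint B T"
  shows "B (fps_apply T lam p f v) w = B v (fps_apply T lam p f w)"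
  unfolding fps_apply_def
  by (simp add: scalar_product_sum_left[OF assms(1)] scalar_product_sum_right[OF assms(1)]
      scalar_product_scale_left[OF assms(1)] scalar_product_scale_right[OF assms(1)]
      self_adjoint_Upow[OF assms])

lemma Upow_in_cycle_span:
  assumes "Upow T lam p v = 0"
  shows "Upow T lam m v \<in> vec.span (cyc T lam v p ` {1..p})"
proof (cases "m < p")
  case True
  then have "Upow T lam m v = cyc T lam v p (p - m)" and "p - m \<in> {1..p}"
    by (auto simp: cyc_def)
  then show ?thesis by (metis image_eqI vec.span_base)
qed (use Upow_eq_0_mono[OF assms] vec.span_zero in simp)

lemma fps_apply_in_cycle_span:
  assumes "Upow T lam p v = 0"
  shows "fps_apply T lam p f (Upow T lam m v) \<in> vec.span (cyc T lam v p ` {1..p})"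
  unfolding fps_apply_def
  by (intro vec.span_sum vec.span_scale) (metis Upow_add Upow_in_cycle_span[OF assms])

lemma cycle_span_fps_apply:
  assumes "Upow T lam p x = 0" and "0 < p" and "fps_nth q 0 \<noteq> 0"
  shows "vec.span (cyc T lam (fps_apply T lam p q x) p ` {1..p}) = vec.span (cyc T lam x p ` {1..p})"
proof -
  let ?x' = "fps_apply T lam p q x"
  have x'_nil: "Upow T lam p ?x' = 0"
    by (simp add: Upow_fps_apply assms(1))
  have x_back: "fps_apply T lam p (inverse q) ?x' = x"
    using fps_apply_mult[OF assms(1), of "inverse q" q] assms(3)
    by (simp add: inverse_mult_eq_1 fps_apply_one[OF assms(2)])
  show ?thesis
    unfolding vec.span_eq
  proof (intro conjI subsetI)
    fix y assume "y \<in> cyc T lam ?x' p ` {1..p}"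
    then obtain i where "y = Upow T lam (p - i) ?x'" by (auto simp: cyc_def)
    then show "y \<in> vec.span (cyc T lam x p ` {1..p})"
      using fps_apply_in_cycle_span[OF assms(1), of q "p - i"] by (simp add: Upow_fps_apply)
  next
    fix y assume "y \<in> cyc T lam x p ` {1..p}"
    then obtain i where "y = Upow T lam (p - i) x" by (auto simp: cyc_def)
    then have "y = fps_apply T lam p (inverse q) (Upow T lam (p - i) ?x')"
      using x_back by (metis Upow_fps_apply)
    then show "y \<in> vec.span (cyc T lam ?x' p ` {1..p})"
      using fps_apply_in_cycle_span[OF x'_nil, of "inverse q" "p - i"] by simp
  qed
qed

text \<open>The index is reversed so that the leading coefficient is \<open>\<langle>v\<^sub>1, v\<^sub>p\<rangle>\<close>; coefficients of index
  \<open>\<ge> p\<close> are junk and never used.\<close>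

definition cycle_gram_fps ::
    "('a::field^'n \<Rightarrow> 'a^'n \<Rightarrow> 'a) \<Rightarrow> 'a^'n^'n \<Rightarrow> 'a \<Rightarrow> 'a^'n \<Rightarrow> nat \<Rightarrow> 'a fps" where
  "cycle_gram_fps B T lam x p = Abs_fps (\<lambda>m. B x (Upow T lam (p - 1 - m) x))"

lemma cycle_gram_fps_nth_0:
  assumes "scalar_product B"
  shows "fps_nth (cycle_gram_fps B T lam x p) 0 = B (cyc T lam x p 1) (cyc T lam x p p)"
  by (simp add: cycle_gram_fps_def cyc_def scalar_product_commute[OF assms])

lemma cycle_gram_fps_mult_nth:
  assumes B: "scalar_product B" and x_nil: "Upow T lam p x = 0" and "n < p"
  shows "(\<Sum>k<p. fps_nth f k * B x (Upow T lam (k + n) x)) =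
    fps_nth (f * cycle_gram_fps B T lam x p) (p - 1 - n)"
proof -
  have "(\<Sum>k<p. fps_nth f k * B x (Upow T lam (k + n) x)) =
      (\<Sum>k=0..p-1-n. fps_nth f k * B x (Upow T lam (k + n) x))"
    using \<open>n < p\<close> Upow_eq_0_mono[OF x_nil]
    by (intro sum.mono_neutral_right) (auto simp: scalar_product_zero_right[OF B])
  also have "\<dots> = fps_nth (f * cycle_gram_fps B T lam x p) (p - 1 - n)"
    unfolding fps_mult_nth cycle_gram_fps_def using \<open>n < p\<close>
    by (intro sum.cong refl) (simp add: Suc_diff_le add.commute)
  finally show ?thesis .
qed

lemma scalar_product_Upow_fps_apply:
  assumes B: "scalar_product B" and T: "self_adjoint B T"
    and x_nil: "Upow T lam p x = 0" and "a + b < p"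
  shows "B (Upow T lam a (fps_apply T lam p q x)) (Upow T lam b (fps_apply T lam p q x)) =
    fps_nth (q * q * cycle_gram_fps B T lam x p) (p - 1 - (a + b))"
proof -
  have Uab_nil: "Upow T lam p (Upow T lam (a + b) x) = 0"
    using Upow_eq_0_mono[OF x_nil, of "p + (a + b)"] by (simp add: Upow_add)
  have "B (Upow T lam a (fps_apply T lam p q x)) (Upow T lam b (fps_apply T lam p q x)) =
      B (fps_apply T lam p q x) (Upow T lam (a + b) (fps_apply T lam p q x))"
    by (simp add: self_adjoint_Upow[OF B T] Upow_add)
  also have "\<dots> = B (fps_apply T lam p q x) (fps_apply T lam p q (Upow T lam (a + b) x))"
    by (simp add: Upow_fps_apply)
  also have "\<dots> = B x (fps_apply T lam p (q * q) (Upow T lam (a + b) x))"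
    by (simp add: self_adjoint_fps_apply[OF B T] fps_apply_mult[OF Uab_nil])
  also have "\<dots> = (\<Sum>k<p. fps_nth (q * q) k * B x (Upow T lam (k + (a + b)) x))"
    unfolding fps_apply_def
    by (simp add: scalar_product_sum_right[OF B] scalar_product_scale_right[OF B] Upow_add)
  also have "\<dots> = fps_nth (q * q * cycle_gram_fps B T lam x p) (p - 1 - (a + b))"
    by (rule cycle_gram_fps_mult_nth[OF B x_nil \<open>a + b < p\<close>])
  finally show ?thesis .
qed

lemma gen_cycle_if_antidiagonal:
  assumes B: "scalar_product B" and "0 < p" and x_nil: "Upow T lam p x = 0" and "eps \<noteq> 0"
    and gram: "\<And>a b. a + b < p \<Longrightarrow>
      B (Upow T lam a x) (Upow T lam b x) = (if a + b = p - 1 then eps else 0)"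
  shows "gen_cycle T lam x p"
  unfolding gen_cycle_def
proof (intro conjI allI impI \<open>0 < p\<close> x_nil)
  fix k assume k: "0 < k \<and> k < p"
  then have "B (Upow T lam k x) (Upow T lam (p - 1 - k) x) = eps"
    using gram[of k "p - 1 - k"] by simp
  then show "Upow T lam k x \<noteq> 0"
    using \<open>eps \<noteq> 0\<close> scalar_product_zero_left[OF B] by auto
qed

lemma skew_normal_if_antidiagonal:
  assumes B: "scalar_product B" and T: "self_adjoint B T" and x_nil: "Upow T lam p x = 0"
    and eps: "eps = 1 \<or> eps = -1"
    and gram: "\<And>a b. a + b < p \<Longrightarrow>
      B (Upow T lam a x) (Upow T lam b x) = (if a + b = p - 1 then eps else 0)"
  shows "skew_normal B (cyc T lam x p) p eps"
  unfolding skew_normal_def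
proof (intro conjI ballI eps)
  fix i j assume ij: "i \<in> {1..p}" "j \<in> {1..p}"
  show "B (cyc T lam x p i) (cyc T lam x p j) = (if i + j = p + 1 then eps else 0)"
  proof (cases "(p - i) + (p - j) < p")
    case True
    then show ?thesis using ij gram[OF True] by (auto simp: cyc_def)
  next
    case False
    have "B (Upow T lam (p - i) x) (Upow T lam (p - j) x) = B x (Upow T lam ((p - i) + (p - j)) x)"
      by (simp add: self_adjoint_Upow[OF B T] Upow_add)
    also have "\<dots> = 0"
      using False Upow_eq_0_mono[OF x_nil] scalar_product_zero_right[OF B] by simp
    finally show ?thesis using False ij by (auto simp: cyc_def)
  qed
qed

lemma fps_square_root_exists:
  fixes g :: "'a::field_char_0 fps"
  assumes "s * s = fps_nth g 0" and "s \<noteq> 0"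
  shows "\<exists>q. q * q = g \<and> fps_nth q 0 = s"
proof -
  let ?q = "fps_radical (\<lambda>_ _. s) (Suc 1) g"
  have "fps_nth g 0 \<noteq> 0" using assms by auto
  then have "?q ^ Suc 1 = g"
    using power_radical[of g "\<lambda>_ _. s" 1] assms by (simp add: power2_eq_square)
  then show ?thesis by (intro exI[of _ ?q]) (simp add: power2_eq_square)
qed

lemma skew_normal_cycle_exists:
  fixes B :: "'a::field_char_0^'n \<Rightarrow> 'a^'n \<Rightarrow> 'a"
  assumes B: "scalar_product B" and T: "self_adjoint B T" and cycle: "gen_cycle T lam x p"
    and eps: "eps = 1 \<or> eps = -1"
    and s: "s * s = eps / B (cyc T lam x p 1) (cyc T lam x p p)"
    and end_pairing: "B (cyc T lam x p 1) (cyc T lam x p p) \<noteq> 0"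
  shows "\<exists>x' \<in> vec.span (cyc T lam x p ` {1..p}). gen_cycle T lam x' p \<and>
    vec.span (cyc T lam x' p ` {1..p}) = vec.span (cyc T lam x p ` {1..p}) \<and>
    skew_normal B (cyc T lam x' p) p eps"
proof -
  from cycle have "0 < p" and x_nil: "Upow T lam p x = 0" by (auto simp: gen_cycle_def)
  define h where "h = cycle_gram_fps B T lam x p"
  have h0: "fps_nth h 0 \<noteq> 0"
    using end_pairing by (simp add: h_def cycle_gram_fps_nth_0[OF B])
  have "eps \<noteq> 0" using eps by auto
  then have "s \<noteq> 0" using s end_pairing by auto
  moreover have "s * s = fps_nth (fps_const eps * inverse h) 0"
    using s h0 by (simp add: h_def cycle_gram_fps_nth_0[OF B] divide_inverse)
  ultimately obtain q where qq: "q * q = fps_const eps * inverse h" and q0: "fps_nth q 0 = s"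
    using fps_square_root_exists by blast
  have qqh: "q * q * h = fps_const eps"
    using qq h0 by (simp add: mult.assoc inverse_mult_eq_1)
  define x' where "x' = fps_apply T lam p q x"
  have x'_nil: "Upow T lam p x' = 0"
    by (simp add: x'_def Upow_fps_apply x_nil)
  have gram: "B (Upow T lam a x') (Upow T lam b x') = (if a + b = p - 1 then eps else 0)"
    if "a + b < p" for a b
    using scalar_product_Upow_fps_apply[OF B T x_nil that, of q] that
    by (auto simp: x'_def h_def[symmetric] qqh)
  show ?thesis
  proof (intro bexI conjI)
    show "gen_cycle T lam x' p"
      by (rule gen_cycle_if_antidiagonal[OF B \<open>0 < p\<close> x'_nil \<open>eps \<noteq> 0\<close> gram])
    show "skew_normal B (cyc T lam x' p) p eps"
      by (rule skew_normal_if_antidiagonal[OF B T x'_nil eps gram])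
    show "vec.span (cyc T lam x' p ` {1..p}) = vec.span (cyc T lam x p ` {1..p})"
      unfolding x'_def using cycle_span_fps_apply[OF x_nil \<open>0 < p\<close>] q0 \<open>s \<noteq> 0\<close> by simp
    show "x' \<in> vec.span (cyc T lam x p ` {1..p})"
      using fps_apply_in_cycle_span[OF x_nil, of q 0] by (simp add: x'_def)
  qed
qed

theorem mainTheorem5:
  shows
  "(\<forall>(B :: real^'n \<Rightarrow> real^'n \<Rightarrow> real) (T :: real^'n^'n) (lam :: real) x p.
      scalar_product B \<and> self_adjoint B T \<and> is_eigenvalue T lam \<and>
      gen_cycle T lam x p \<and> B (cyc T lam x p 1) (cyc T lam x p p) \<noteq> 0 \<longrightarrow>
      (\<exists>x' \<in> vec.span (cyc T lam x p ` {1..p}).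
         gen_cycle T lam x' p \<and>
         vec.span (cyc T lam x' p ` {1..p}) = vec.span (cyc T lam x p ` {1..p}) \<and>
         skew_normal B (cyc T lam x' p) p (sgn (B (cyc T lam x p 1) (cyc T lam x p p)))))
   \<and>
   (\<forall>(B :: complex^'m \<Rightarrow> complex^'m \<Rightarrow> complex) (T :: complex^'m^'m) (lam :: complex) x p.
      scalar_product B \<and> self_adjoint B T \<and> is_eigenvalue T lam \<and> lam \<notin> \<real> \<and>
      gen_cycle T lam x p \<and> B (cyc T lam x p 1) (cyc T lam x p p) \<noteq> 0 \<longrightarrow>
      (\<exists>x' \<in> vec.span (cyc T lam x p ` {1..p}).
         gen_cycle T lam x' p \<and>
         vec.span (cyc T lam x' p ` {1..p}) = vec.span (cyc T lam x p ` {1..p}) \<and>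
         skew_normal B (cyc T lam x' p) p 1))"
proof (intro conjI allI impI; elim conjE)
  fix B :: "real^'n \<Rightarrow> real^'n \<Rightarrow> real" and T :: "real^'n^'n" and lam :: real and x p
  assume B: "scalar_product B" and T: "self_adjoint B T" and cycle: "gen_cycle T lam x p"
    and d: "B (cyc T lam x p 1) (cyc T lam x p p) \<noteq> 0"
  let ?d = "B (cyc T lam x p 1) (cyc T lam x p p)"
  have sign: "sgn ?d = 1 \<or> sgn ?d = -1"
    and root: "sqrt (1 / \<bar>?d\<bar>) * sqrt (1 / \<bar>?d\<bar>) = sgn ?d / ?d"
    using d by (auto simp: sgn_real_def)
  show "\<exists>x' \<in> vec.span (cyc T lam x p ` {1..p}). gen_cycle T lam x' p \<and>
      vec.span (cyc T lam x' p ` {1..p}) = vec.span (cyc T lam x p ` {1..p}) \<and>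
      skew_normal B (cyc T lam x' p) p (sgn ?d)"
    by (rule skew_normal_cycle_exists[OF B T cycle sign root d])
next
  fix B :: "complex^'m \<Rightarrow> complex^'m \<Rightarrow> complex" and T :: "complex^'m^'m" and lam :: complex
    and x p
  assume B: "scalar_product B" and T: "self_adjoint B T" and cycle: "gen_cycle T lam x p"
    and d: "B (cyc T lam x p 1) (cyc T lam x p p) \<noteq> 0"
  let ?d = "B (cyc T lam x p 1) (cyc T lam x p p)"
  have root: "csqrt (1 / ?d) * csqrt (1 / ?d) = 1 / ?d"
    by (metis power2_csqrt power2_eq_square)
  show "\<exists>x' \<in> vec.span (cyc T lam x p ` {1..p}). gen_cycle T lam x' p \<and>
      vec.span (cyc T lam x' p ` {1..p}) = vec.span (cyc T lam x p ` {1..p}) \<and>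
      skew_normal B (cyc T lam x' p) p 1"
    by (rule skew_normal_cycle_exists[OF B T cycle _ root d]) simp
qed

end
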